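(* Let $P_c$ and $P_d$ be the programs defined in the context, built with the same ordering $\alpha$ of $X$, and let $A'\subseteq A^+$. Then $P_d$ has a supported model $M$ with $A'=\{\vec a\in A^+: a\in M\}$ if and only if $P_c$ has a supported model $N$ with $A'=\{\vec a\in A^+: a\in N\}$.
   Context: Delete-relaxed planning. Let $X$ be a finite set of atomic propositions, $A^+$ a finite set of actions, and $G\subseteq X$. Each action $\vec a\in A^+$ has $pre(\vec a),add(\vec a)\subseteq X$; there are no delete effects and the initial state is $\emptyset$. For each action $\vec a$ there is an action atom $a$. Further atoms are: - $\mathrm{dep}(p,q)$ for $p,q\in X$; - $\mathrm{ws}(a,p)$ for actions $\vec a$ and $p\in X$; - a special atom $f$. All these atoms are pairwise distinct and distinct from $X$. Logic programs. A normal rule has the form $h\leftarrow b_1,\dots,b_n,\mathtt{not}\,c_1,\dots,\mathtt{not}\,c_m$, and a choice rule has the form $\{h\}\leftarrow(\text{same body})$; the body may be empty. An interpretation $I$ satisfies a body if all $b_i\in I$ and no $c_j\in I$. $I$ is a model if every normal rule whose body $I$ satisfies has its head in $I$. The supporting rules w.r.t. $I$ are: - the normal rules whose body $I$ satisfies; - the choice rules whose body $I$ satisfies and whose head is in $I$. A model $I$ is supported if $I$ equals the set of heads of its supporting rules. Vertex elimination. For a digraph $(V',E')$ and vertex $v$: - the fill-in is $F(v)=\{(x,y):(x,v),(v,y)\in E',x\ne y\}$; - the $v$-elimination graph deletes $v$ together with its incident arcs and adds $F(v)$. For an ordering $\alpha:\{1,\dots,n\}\to V$ of a digraph $\mathcal{G}$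 with $n$ vertices, set $\mathcal{G}_0=\mathcal{G}$ and let $\mathcal{G}_i$ be the $\alpha(i)$-elimination graph of $\mathcal{G}_{i-1}$ for $i=1,\dots,n-1$. Let $F_{i-1}(\alpha(i))$ be the fill-in of $\alpha(i)$ in $\mathcal{G}_{i-1}$. The vertex elimination graph $\mathcal{G}^*_\alpha=(V,E^* )$ has as arcs the original arcs together with all $F_{i-1}(\alpha(i))$. Let $E=\{(p,q)\in X\times X:\exists \vec a\in A^+,\ p\in add(\vec a),\ q\in pre(\vec a)\}$ and $\mathcal{G}=(X,E)$. Let $n=|X|$, fix an ordering $\alpha$ of $X$, and let $E^*$ be the arc set of $\mathcal{G}^*_\alpha$. Define the rule groups: - (C5) $\mathrm{dep}(p,q)\leftarrow\mathrm{dep}(p,\alpha(i)),\mathrm{dep}(\alpha(i),q)$ for each $i\in\{1,\dots,n-1\}$ and each $(p,q)\in F_{i-1}(\alpha(i))$; - (C6) $f\leftarrow \mathrm{dep}(p,q),\mathrm{dep}(q,p),\mathtt{not}\,f$ for all $p,q\in X$ (possibly $p=q$) with $(p,q),(q,p)\in E^*$. Program $P_c$ (causal) consists of (C5), (C6), and: - (C1) $\{\mathrm{dep}(p,q)\}\leftarrow q$ for each $(p,q)\in E$; - (C2) $\{\mathrm{ws}(a,p)\}\leftarrow \mathrm{dep}(p,q_1),\dots,\mathrm{dep}(p,q_k)$ for each $\vec a\in A^+$ and $p\in add(\vec a)$, where $pre(\vec a)=\{q_1,\dots,q_k\}$; - (C3) $p\leftarrow \mathrm{ws}(a,p)$ and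 $a\leftarrow\mathrm{ws}(a,p)$ for each $\vec a\in A^+$ and $p\in add(\vec a)$; - (C4) $g\leftarrow\mathtt{not}\,g$ for each $g\in G$. Program $P_d$ (diagnostic) consists of (C5), (C6), and: - (D1) $\{p\}\leftarrow$ (empty body) for each $p\in X$; - (D2) $\{\mathrm{ws}(a,p)\}\leftarrow p$ for each $\vec a\in A^+$ and $p\in add(\vec a)$; - (D3) $f\leftarrow p,\mathtt{not}\,\mathrm{ws}(a_1,p),\dots,\mathtt{not}\,\mathrm{ws}(a_m,p),\mathtt{not}\,f$ for each $p\in X$, where $\vec a_1,\dots,\vec a_m$ are all actions $\vec a$ with $p\in add(\vec a)$; - (D4) $\mathrm{dep}(p,q)\leftarrow\mathrm{ws}(a,p)$ for each $\vec a\in A^+$, $p\in add(\vec a)$ and $q\in pre(\vec a)$; - (D5) $q\leftarrow\mathrm{dep}(p,q)$ for each $(p,q)\in E$; - (D6) $a\leftarrow\mathrm{ws}(a,p)$ for each $\vec a\in A^+$ and $p\in add(\vec a)$; - (D7) $g\leftarrow\mathtt{not}\,g$ for each $g\in G$. *)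

theory Defs
  imports Main
begin

datatype ('x, 'a) atom = Prop 'x | Act 'a | Dep 'x 'x | WS 'a 'x | FAtom

datatype ('x, 'a) rule =
    Normal "('x,'a) atom" "('x,'a) atom set" "('x,'a) atom set"
  | Choice "('x,'a) atom" "('x,'a) atom set" "('x,'a) atom set"

fun head :: "('x,'a) rule \<Rightarrow> ('x,'a) atom" where
  "head (Normal h _ _) = h" | "head (Choice h _ _) = h"

fun body_sat :: "('x,'a) atom set \<Rightarrow> ('x,'a) rule \<Rightarrow> bool" where
  "body_sat I (Normal _ B C) = (B \<subseteq> I \<and> C \<inter> I = {})"
| "body_sat I (Choice _ B C) = (B \<subseteq> I \<and> C \<inter> I = {})"

fun is_normal :: "('x,'a) rule \<Rightarrow> bool" where
  "is_normal (Normal _ _ _) = True" | "is_normal (Choice _ _ _) = False"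

definition is_model :: "('x,'a) rule set \<Rightarrow> ('x,'a) atom set \<Rightarrow> bool" where
  "is_model P I \<longleftrightarrow> (\<forall>r\<in>P. is_normal r \<and> body_sat I r \<longrightarrow> head r \<in> I)"

definition supporting_rules :: "('x,'a) rule set \<Rightarrow> ('x,'a) atom set \<Rightarrow> ('x,'a) rule set" where
  "supporting_rules P I =
     {r\<in>P. is_normal r \<and> body_sat I r} \<union> {r\<in>P. \<not> is_normal r \<and> body_sat I r \<and> head r \<in> I}"

definition supported_model :: "('x,'a) rule set \<Rightarrow> ('x,'a) atom set \<Rightarrow> bool" where
  "supported_model P I \<longleftrightarrow> is_model P I \<and> I = head ` supporting_rules P I"

definition fill_in :: "'x \<Rightarrow> ('x \<times> 'x) set \<Rightarrow> ('x \<times> 'x) set" where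
  "fill_in v E' = {(x,y). (x,v) \<in> E' \<and> (v,y) \<in> E' \<and> x \<noteq> y}"

definition elim :: "'x \<Rightarrow> ('x \<times> 'x) set \<Rightarrow> ('x \<times> 'x) set" where
  "elim v E' = {(x,y) \<in> E'. x \<noteq> v \<and> y \<noteq> v} \<union> fill_in v E'"

fun elim_seq :: "('x \<times> 'x) set \<Rightarrow> (nat \<Rightarrow> 'x) \<Rightarrow> nat \<Rightarrow> ('x \<times> 'x) set" where
  "elim_seq E \<alpha> 0 = E"
| "elim_seq E \<alpha> (Suc i) = elim (\<alpha> (Suc i)) (elim_seq E \<alpha> i)"

definition fill_step :: "('x \<times> 'x) set \<Rightarrow> (nat \<Rightarrow> 'x) \<Rightarrow> nat \<Rightarrow> ('x \<times> 'x) set" where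
  "fill_step E \<alpha> i = fill_in (\<alpha> i) (elim_seq E \<alpha> (i - 1))"

definition elim_arcs :: "('x \<times> 'x) set \<Rightarrow> (nat \<Rightarrow> 'x) \<Rightarrow> nat \<Rightarrow> ('x \<times> 'x) set" where
  "elim_arcs E \<alpha> n = E \<union> (\<Union>i\<in>{1..n-1}. fill_step E \<alpha> i)"

definition dep_graph :: "'a set \<Rightarrow> ('a \<Rightarrow> 'x set) \<Rightarrow> ('a \<Rightarrow> 'x set) \<Rightarrow> ('x \<times> 'x) set" where
  "dep_graph Acts pre add = {(p,q). \<exists>a\<in>Acts. p \<in> add a \<and> q \<in> pre a}"

definition rules_C5 :: "'x set \<Rightarrow> 'a set \<Rightarrow> ('a \<Rightarrow> 'x set) \<Rightarrow> ('a \<Rightarrow> 'x set) \<Rightarrow> (nat \<Rightarrow> 'x)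
    \<Rightarrow> ('x,'a) rule set" where
  "rules_C5 X Acts pre add \<alpha> =
     {Normal (Dep p q) {Dep p (\<alpha> i), Dep (\<alpha> i) q} {} | i p q.
        i \<in> {1..card X - 1} \<and> (p,q) \<in> fill_step (dep_graph Acts pre add) \<alpha> i}"

definition rules_C6 :: "'x set \<Rightarrow> 'a set \<Rightarrow> ('a \<Rightarrow> 'x set) \<Rightarrow> ('a \<Rightarrow> 'x set) \<Rightarrow> (nat \<Rightarrow> 'x)
    \<Rightarrow> ('x,'a) rule set" where
  "rules_C6 X Acts pre add \<alpha> =
     (let Es = elim_arcs (dep_graph Acts pre add) \<alpha> (card X) in
      {Normal FAtom {Dep p q, Dep q p} {FAtom} | p q.
        p \<in> X \<and> q \<in> X \<and> (p,q) \<in> Es \<and> (q,p) \<in> Es})"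

definition goal_rules :: "'x set \<Rightarrow> ('x,'a) rule set" where
  "goal_rules G = {Normal (Prop g) {} {Prop g} | g. g \<in> G}"

definition P_c :: "'x set \<Rightarrow> 'a set \<Rightarrow> ('a \<Rightarrow> 'x set) \<Rightarrow> ('a \<Rightarrow> 'x set) \<Rightarrow> 'x set
    \<Rightarrow> (nat \<Rightarrow> 'x) \<Rightarrow> ('x,'a) rule set" where
  "P_c X Acts pre add G \<alpha> =
     rules_C5 X Acts pre add \<alpha> \<union> rules_C6 X Acts pre add \<alpha>
   \<union> {Choice (Dep p q) {Prop q} {} | p q. (p,q) \<in> dep_graph Acts pre add}
   \<union> {Choice (WS a p) (Dep p ` pre a) {} | a p. a \<in> Acts \<and> p \<in> add a}
   \<union> {Normal (Prop p) {WS a p} {} | a p. a \<in> Acts \<and> p \<in> add a}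
   \<union> {Normal (Act a) {WS a p} {} | a p. a \<in> Acts \<and> p \<in> add a}
   \<union> goal_rules G"

definition P_d :: "'x set \<Rightarrow> 'a set \<Rightarrow> ('a \<Rightarrow> 'x set) \<Rightarrow> ('a \<Rightarrow> 'x set) \<Rightarrow> 'x set
    \<Rightarrow> (nat \<Rightarrow> 'x) \<Rightarrow> ('x,'a) rule set" where
  "P_d X Acts pre add G \<alpha> =
     rules_C5 X Acts pre add \<alpha> \<union> rules_C6 X Acts pre add \<alpha>
   \<union> {Choice (Prop p) {} {} | p. p \<in> X}
   \<union> {Choice (WS a p) {Prop p} {} | a p. a \<in> Acts \<and> p \<in> add a}
   \<union> {Normal FAtom {Prop p} ({WS a p | a. a \<in> Acts \<and> p \<in> add a} \<union> {FAtom}) | p. p \<in> X}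
   \<union> {Normal (Dep p q) {WS a p} {} | a p q. a \<in> Acts \<and> p \<in> add a \<and> q \<in> pre a}
   \<union> {Normal (Prop q) {Dep p q} {} | p q. (p,q) \<in> dep_graph Acts pre add}
   \<union> {Normal (Act a) {WS a p} {} | a p. a \<in> Acts \<and> p \<in> add a}
   \<union> goal_rules G"

end

theory Submission
  imports Defs
begin

text \<open>
  A supported model of \<open>P_d\<close> is already a supported model of \<open>P_c\<close>: a dep atom justified
  by (D4) is also justified by (C1), because (D5) puts \<open>q\<close> into the model, and \<open>ws(a,p)\<close> is
  justified by (C2), because (D4) puts all its dep atoms into the model.

  Conversely, let \<open>N\<close> be a supported model of \<open>P_c\<close>. Its dep atoms form a relation \<open>R\<close>
  that is closed under the fill-in rules (C5), whose arcs are supported by arcs of \<open>E\<close> or by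
  fill-ins, and which by (C6) has no 2-cycle inside \<open>E\<^sup>*\<close>. Such a relation is acyclic:
  a cycle whose earliest eliminated vertex is \<open>\<alpha>(j)\<close> can be unfolded to one that enters and
  leaves \<open>\<alpha>(j)\<close> through arcs of the \<open>j-1\<close>st elimination graph, and the fill-in arc between
  these two neighbours short-cuts it to a cycle among later vertices. Acyclicity makes the
  support of \<open>dep(p,q)\<close> by \<open>q\<close> well-founded, so \<open>q \<in> N\<close> whenever \<open>dep(p,q) \<in> N\<close>.
  Keeping only the dep atoms generated from the ws atoms by (D4) and (C5) then gives a
  supported model of \<open>P_d\<close> with the same action atoms.
\<close>

section \<open>Elimination graphs\<close>

lemma fill_in_converse: "fill_in v (E\<inverse>) = (fill_in v E)\<inverse>"
  by (auto simp: fill_in_def)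

lemma elim_converse: "elim v (E\<inverse>) = (elim v E)\<inverse>"
  by (auto simp: elim_def fill_in_def)

lemma elim_seq_converse: "elim_seq (E\<inverse>) \<alpha> i = (elim_seq E \<alpha> i)\<inverse>"
  by (induction i) (simp_all add: elim_converse)

lemma fill_step_converse: "fill_step (E\<inverse>) \<alpha> i = (fill_step E \<alpha> i)\<inverse>"
  by (simp add: fill_step_def elim_seq_converse fill_in_converse)

lemma elim_arcs_converse: "elim_arcs (E\<inverse>) \<alpha> n = (elim_arcs E \<alpha> n)\<inverse>"
  by (auto simp: elim_arcs_def fill_step_converse)

lemma fill_step_subset_elim_seq: "1 \<le> i \<Longrightarrow> fill_step E \<alpha> i \<subseteq> elim_seq E \<alpha> i"
  by (cases i) (auto simp: fill_step_def elim_def)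

lemma elim_seq_subset_elim_arcs: "j < n \<Longrightarrow> elim_seq E \<alpha> j \<subseteq> elim_arcs E \<alpha> n"
proof (induction j)
  case (Suc j)
  then have "fill_step E \<alpha> (Suc j) \<subseteq> elim_arcs E \<alpha> n"
    unfolding elim_arcs_def by force
  with Suc show ?case
    by (auto simp: elim_def fill_step_def)
qed (auto simp: elim_arcs_def)

lemma elim_seq_subset_square: "E \<subseteq> A \<times> A \<Longrightarrow> elim_seq E \<alpha> i \<subseteq> A \<times> A"
  by (induction i) (auto simp: elim_def fill_in_def)

lemma elim_arcs_subset_square:
  assumes "E \<subseteq> A \<times> A"
  shows "elim_arcs E \<alpha> n \<subseteq> A \<times> A"
proof -
  have "fill_step E \<alpha> i \<subseteq> A \<times> A" for i
    unfolding fill_step_def fill_in_def using elim_seq_subset_square[OF assms, of \<alpha> "i - 1"] by blast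
  with assms show ?thesis by (auto simp: elim_arcs_def)
qed

lemma elim_seq_persist:
  assumes "(a, b) \<in> elim_seq E \<alpha> t" and "t \<le> t'"
    and "\<And>s. t < s \<Longrightarrow> s \<le> t' \<Longrightarrow> \<alpha> s \<noteq> a \<and> \<alpha> s \<noteq> b"
  shows "(a, b) \<in> elim_seq E \<alpha> t'"
  using assms
proof (induction t')
  case (Suc t')
  show ?case
  proof (cases "t = Suc t'")
    case False
    with Suc have "(a, b) \<in> elim_seq E \<alpha> t'" and "\<alpha> (Suc t') \<noteq> a \<and> \<alpha> (Suc t') \<noteq> b"
      by auto
    then show ?thesis by (auto simp: elim_def)
  qed (use Suc.prems in simp)
qed simp

lemma trancl_Restr_insert:
  assumes "(a, b) \<in> (Restr R (insert v A))\<^sup>+"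
  shows "(a, b) \<in> (Restr R A)\<^sup>+ \<or>
    (a, v) \<in> (Restr R (insert v A))\<^sup>* \<and> (v, b) \<in> (Restr R (insert v A))\<^sup>*"
  using assms
proof (induction rule: trancl_induct)
  case (base b)
  then show ?case by blast
next
  case (step c b)
  then show ?case
    by (auto intro: trancl_into_trancl rtrancl_into_rtrancl)
qed

lemma trancl_Restr_insert_from:
  assumes "(v, b) \<in> (Restr R (insert v A))\<^sup>+" and "v \<notin> A"
  shows "b = v \<or> (\<exists>w\<in>A. (v, w) \<in> R \<and> (w, b) \<in> (Restr R A)\<^sup>*)"
  using assms
proof (induction rule: trancl_induct)
  case (step c b)
  then show ?case
    by (auto intro: rtrancl_into_rtrancl)
qed auto

lemma rtrancl_Restr_mem_iff:
  assumes "(a, b) \<in> (Restr R A)\<^sup>*"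
  shows "a \<in> A \<longleftrightarrow> b \<in> A"
proof -
  have "a = b \<or> a \<in> A" by (rule trancl_subset_Sigma_aux[OF assms]) blast
  moreover have "b = a \<or> b \<in> A" by (rule trancl_subset_Sigma_aux[OF rtrancl_converseI[OF assms]]) blast
  ultimately show ?thesis by blast
qed

section \<open>Acyclicity of relations closed under elimination\<close>

text \<open>
  \<open>R\<close> stands for the dep atoms of a supported model of \<open>P_c\<close>: \<open>fill_closed\<close> is (C5),
  \<open>fill_supported\<close> says that each atom is supported by (C1) or (C5), and \<open>no_2cycle\<close> is (C6).
\<close>

locale elimination_closed =
  fixes X :: "'x set" and E :: "('x \<times> 'x) set" and \<alpha> :: "nat \<Rightarrow> 'x" and n :: nat
    and R :: "('x \<times> 'x) set"
  assumes enum: "bij_betw \<alpha> {1..n} X"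
    and arcs_in: "E \<subseteq> X \<times> X"
    and no_2cycle: "\<And>p q. (p, q) \<in> R \<Longrightarrow> (q, p) \<in> R \<Longrightarrow>
      (p, q) \<in> elim_arcs E \<alpha> n \<Longrightarrow> (q, p) \<in> elim_arcs E \<alpha> n \<Longrightarrow> False"
    and fill_closed: "\<And>i p q. i \<in> {1..n-1} \<Longrightarrow> (p, q) \<in> fill_step E \<alpha> i \<Longrightarrow>
      (p, \<alpha> i) \<in> R \<Longrightarrow> (\<alpha> i, q) \<in> R \<Longrightarrow> (p, q) \<in> R"
    and fill_supported: "\<And>p q. (p, q) \<in> R \<Longrightarrow> (p, q) \<in> E \<or>
      (\<exists>i\<in>{1..n-1}. (p, q) \<in> fill_step E \<alpha> i \<and> (p, \<alpha> i) \<in> R \<and> (\<alpha> i, q) \<in> R)"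
begin

lemma elimination_closed_converse: "elimination_closed X (E\<inverse>) \<alpha> n (R\<inverse>)"
proof
  show "bij_betw \<alpha> {1..n} X" by (rule enum)
  show "E\<inverse> \<subseteq> X \<times> X" using arcs_in by blast
  show "False" if "(p, q) \<in> R\<inverse>" "(q, p) \<in> R\<inverse>" "(p, q) \<in> elim_arcs (E\<inverse>) \<alpha> n"
    "(q, p) \<in> elim_arcs (E\<inverse>) \<alpha> n" for p q
    using no_2cycle that by (simp add: elim_arcs_converse)
  show "(p, q) \<in> R\<inverse>" if "i \<in> {1..n-1}" "(p, q) \<in> fill_step (E\<inverse>) \<alpha> i"
    "(p, \<alpha> i) \<in> R\<inverse>" "(\<alpha> i, q) \<in> R\<inverse>" for i p q
    using fill_closed that by (simp add: fill_step_converse)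
  show "(p, q) \<in> E\<inverse> \<or> (\<exists>i\<in>{1..n-1}. (p, q) \<in> fill_step (E\<inverse>) \<alpha> i \<and>
      (p, \<alpha> i) \<in> R\<inverse> \<and> (\<alpha> i, q) \<in> R\<inverse>)" if "(p, q) \<in> R\<inverse>" for p q
    using fill_supported[of q p] that by (auto simp: fill_step_converse)
qed

lemma subset_elim_arcs: "R \<subseteq> elim_arcs E \<alpha> n"
  using fill_supported by (fastforce simp: elim_arcs_def)

lemma loop_free: "(p, p) \<notin> R"
  using no_2cycle subset_elim_arcs by blast

lemma subset_square: "R \<subseteq> X \<times> X"
  using subset_elim_arcs elim_arcs_subset_square[OF arcs_in] by blast

lemma alpha_inj: "i \<in> {1..n} \<Longrightarrow> k \<in> {1..n} \<Longrightarrow> \<alpha> i = \<alpha> k \<Longrightarrow> i = k"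
  by (rule inj_onD[OF bij_betw_imp_inj_on[OF enum]])

lemma alpha_above_iff:
  assumes "i \<in> {1..n}"
  shows "\<alpha> i \<in> \<alpha> ` {m..n} \<longleftrightarrow> m \<le> i"
proof
  assume "\<alpha> i \<in> \<alpha> ` {m..n}"
  then obtain k where "k \<in> {m..n}" "\<alpha> i = \<alpha> k" by blast
  with assms alpha_inj[of i k] show "m \<le> i" by (cases "m = 0") auto
next
  assume "m \<le> i"
  with assms show "\<alpha> i \<in> \<alpha> ` {m..n}" by simp
qed

lemma finite_R: "finite R"
proof (rule finite_subset[OF subset_square])
  show "finite (X \<times> X)" using bij_betw_finite enum by blast
qed

lemma wf_Restr: "acyclic (Restr R A) \<Longrightarrow> wf (Restr R A)"
  by (rule finite_acyclic_wf[OF finite_subset[OF Int_lower1 finite_R]])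

text \<open>
  Arcs of \<open>E\<close> and fill-ins of earlier vertices persist up to the \<open>j-1\<close>st elimination graph,
  so an arc of \<open>R\<close> from \<open>\<alpha> j\<close> that is missing there was derived through a later vertex;
  following these derivations terminates because \<open>R\<close> is acyclic on the later vertices.
\<close>

lemma arc_from_eliminated:
  assumes j: "j \<in> {1..n-1}" and acyc: "acyclic (Restr R (\<alpha> ` {Suc j..n}))"
  shows "(\<alpha> j, w) \<in> R \<Longrightarrow> w \<in> \<alpha> ` {Suc j..n} \<Longrightarrow>
    \<exists>w'. (\<alpha> j, w') \<in> R \<and> (\<alpha> j, w') \<in> elim_seq E \<alpha> (j - 1) \<and>
      (w', w) \<in> (Restr R (\<alpha> ` {Suc j..n}))\<^sup>*"
proof (induction w rule: wf_induct_rule[OF wf_Restr[OF acyc]])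
  case (1 w)
  let ?V = "\<alpha> ` {Suc j..n}"
  have persist: "(\<alpha> j, w) \<in> elim_seq E \<alpha> (j - 1)" if "(\<alpha> j, w) \<in> elim_seq E \<alpha> t" "t \<le> j - 1" for t
  proof (rule elim_seq_persist[OF that])
    fix s assume "t < s" "s \<le> j - 1"
    then have "s \<in> {1..n}" "\<not> Suc j \<le> s" "s \<noteq> j" using j by auto
    then show "\<alpha> s \<noteq> \<alpha> j \<and> \<alpha> s \<noteq> w"
      using "1.prems"(2) alpha_inj[of s j] alpha_above_iff[of s "Suc j"] j by auto
  qed
  show ?case
  proof (cases "(\<alpha> j, w) \<in> elim_seq E \<alpha> (j - 1)")
    case outside: False
    have "(\<alpha> j, w) \<notin> E" using persist[of 0] outside by auto
    then obtain i where i: "i \<in> {1..n-1}" "(\<alpha> j, w) \<in> fill_step E \<alpha> i"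
      and ji: "(\<alpha> j, \<alpha> i) \<in> R" and iw: "(\<alpha> i, w) \<in> R"
      using fill_supported[OF "1.prems"(1)] by blast
    have "\<not> i < j"
    proof
      assume "i < j"
      moreover have "(\<alpha> j, w) \<in> elim_seq E \<alpha> i"
        using i fill_step_subset_elim_seq by fastforce
      ultimately show False using persist outside by simp
    qed
    moreover have "i \<noteq> j" using ji loop_free by blast
    ultimately have "\<alpha> i \<in> ?V" using i by auto
    with iw "1.prems"(2) have "(\<alpha> i, w) \<in> Restr R ?V" by blast
    with "1.IH" ji \<open>\<alpha> i \<in> ?V\<close> show ?thesis
      by (meson rtrancl.rtrancl_into_rtrancl)
  qed (use "1.prems" in blast)
qed

lemma arc_into_eliminated:
  assumes j: "j \<in> {1..n-1}" and acyc: "acyclic (Restr R (\<alpha> ` {Suc j..n}))"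
    and "(u, \<alpha> j) \<in> R" and "u \<in> \<alpha> ` {Suc j..n}"
  shows "\<exists>u'. (u', \<alpha> j) \<in> R \<and> (u', \<alpha> j) \<in> elim_seq E \<alpha> (j - 1) \<and>
    (u, u') \<in> (Restr R (\<alpha> ` {Suc j..n}))\<^sup>*"
proof -
  interpret dual: elimination_closed X "E\<inverse>" \<alpha> n "R\<inverse>" by (rule elimination_closed_converse)
  have "Restr (R\<inverse>) (\<alpha> ` {Suc j..n}) = (Restr R (\<alpha> ` {Suc j..n}))\<inverse>" by auto
  with acyc have "acyclic (Restr (R\<inverse>) (\<alpha> ` {Suc j..n}))" by simp
  from dual.arc_from_eliminated[OF j this] assms(3,4) \<open>Restr (R\<inverse>) _ = _\<close> show ?thesis
    by (auto simp: elim_seq_converse rtrancl_converse)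
qed

lemma above_insert: "j \<in> {1..n} \<Longrightarrow> \<alpha> ` {j..n} = insert (\<alpha> j) (\<alpha> ` {Suc j..n})"
  by (simp add: Icc_eq_insert_lb_nat)

lemma no_cycle_through_eliminated:
  assumes j: "j \<in> {1..n-1}" and acyc: "acyclic (Restr R (\<alpha> ` {Suc j..n}))"
  shows "(\<alpha> j, \<alpha> j) \<notin> (Restr R (insert (\<alpha> j) (\<alpha> ` {Suc j..n})))\<^sup>+"
proof
  let ?v = "\<alpha> j" and ?V = "\<alpha> ` {Suc j..n}"
  let ?T = "Restr R (insert ?v ?V)"
  assume "(?v, ?v) \<in> ?T\<^sup>+"
  then obtain u where vu: "(?v, u) \<in> ?T\<^sup>*" and "(u, ?v) \<in> ?T" by (blast dest: tranclD2)
  then have uv: "(u, ?v) \<in> R" and u: "u \<in> ?V" and "u \<noteq> ?v" using loop_free by auto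
  with vu have "(?v, u) \<in> ?T\<^sup>+" using rtranclD by metis
  moreover have "?v \<notin> ?V" using j alpha_above_iff[of j "Suc j"] by auto
  ultimately have "\<exists>w\<in>?V. (?v, w) \<in> R \<and> (w, u) \<in> (Restr R ?V)\<^sup>*"
    using trancl_Restr_insert_from \<open>u \<noteq> ?v\<close> by metis
  then obtain w where w: "w \<in> ?V" and vw: "(?v, w) \<in> R" and wu: "(w, u) \<in> (Restr R ?V)\<^sup>*"
    by blast
  obtain w' where vw': "(?v, w') \<in> R" "(?v, w') \<in> elim_seq E \<alpha> (j - 1)"
    and w'w: "(w', w) \<in> (Restr R ?V)\<^sup>*"
    using arc_from_eliminated[OF j acyc vw w] by blast
  obtain u' where u'v: "(u', ?v) \<in> R" "(u', ?v) \<in> elim_seq E \<alpha> (j - 1)"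
    and uu': "(u, u') \<in> (Restr R ?V)\<^sup>*"
    using arc_into_eliminated[OF j acyc uv u] by blast
  show False
  proof (cases "u' = w'")
    case True
    have "elim_seq E \<alpha> (j - 1) \<subseteq> elim_arcs E \<alpha> n"
      using j by (intro elim_seq_subset_elim_arcs) auto
    with True vw' u'v show False using no_2cycle by blast
  next
    case False
    with vw' u'v have "(u', w') \<in> fill_step E \<alpha> j"
      by (simp add: fill_step_def fill_in_def)
    with j vw' u'v have "(u', w') \<in> R" using fill_closed by blast
    moreover have "u' \<in> ?V" "w' \<in> ?V"
      using rtrancl_Restr_mem_iff[OF uu'] rtrancl_Restr_mem_iff[OF w'w] u w by auto
    ultimately have "(u', w') \<in> Restr R ?V" by blast
    moreover have "(w', u') \<in> (Restr R ?V)\<^sup>*" using w'w wu uu' by simp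
    ultimately have "(w', w') \<in> (Restr R ?V)\<^sup>+" by (rule rtrancl_into_trancl1[rotated])
    with acyc show False by (simp add: acyclic_def)
  qed
qed

lemma acyclic_step:
  assumes j: "j \<in> {1..n-1}" and acyc: "acyclic (Restr R (\<alpha> ` {Suc j..n}))"
  shows "acyclic (Restr R (\<alpha> ` {j..n}))"
  unfolding acyclic_def
proof (intro allI notI)
  let ?T = "Restr R (insert (\<alpha> j) (\<alpha> ` {Suc j..n}))"
  fix x assume "(x, x) \<in> (Restr R (\<alpha> ` {j..n}))\<^sup>+"
  moreover have "\<alpha> ` {j..n} = insert (\<alpha> j) (\<alpha> ` {Suc j..n})" using j by (intro above_insert) auto
  ultimately have x: "(x, x) \<in> ?T\<^sup>+" by simp
  from trancl_Restr_insert[OF x] acyc have "(x, \<alpha> j) \<in> ?T\<^sup>*" "(\<alpha> j, x) \<in> ?T\<^sup>*"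
    unfolding acyclic_def by blast+
  with x have "(\<alpha> j, \<alpha> j) \<in> ?T\<^sup>+" by (meson rtrancl_trancl_trancl trancl_rtrancl_trancl)
  with no_cycle_through_eliminated[OF j acyc] show False by contradiction
qed

lemma acyclic_above: "m \<le> n \<Longrightarrow> 1 \<le> m \<Longrightarrow> acyclic (Restr R (\<alpha> ` {m..n}))"
proof (induction m rule: inc_induct)
  case base
  have "Restr R (\<alpha> ` {n..n}) = {}" using loop_free by auto
  then show ?case by (simp add: acyclic_def)
next
  case (step m)
  then show ?case using acyclic_step[of m] by simp
qed

lemma acyclic_R: "acyclic R"
proof (cases "n = 0")
  case True
  with enum subset_square have "R = {}" by (auto simp: bij_betw_def)
  then show ?thesis by (simp add: acyclic_def)
next
  case False
  with enum subset_square have "R = Restr R (\<alpha> ` {1..n})" by (auto simp: bij_betw_def)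
  with False acyclic_above[of 1] show ?thesis by simp
qed

lemma wf_converse_R: "wf (R\<inverse>)"
  by (rule finite_acyclic_wf_converse[OF finite_R acyclic_R])

end

section \<open>Supported models of the causal and diagnostic encodings\<close>

lemma supported_model_closed:
  "supported_model P I \<Longrightarrow> r \<in> P \<Longrightarrow> is_normal r \<Longrightarrow> body_sat I r \<Longrightarrow> head r \<in> I"
  by (auto simp: supported_model_def is_model_def)

lemma supported_model_supported:
  assumes "supported_model P I" and "x \<in> I"
  obtains r where "r \<in> P" "body_sat I r" "head r = x"
proof -
  from assms have "x \<in> head ` supporting_rules P I" by (simp add: supported_model_def)
  then show ?thesis using that by (auto simp: supporting_rules_def)
qed

lemma supported_modelI:
  assumes "is_model P I" and "\<And>x. x \<in> I \<Longrightarrow> \<exists>r\<in>P. body_sat I r \<and> head r = x"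
  shows "supported_model P I"
proof -
  have "head ` supporting_rules P I \<subseteq> I"
    using assms(1) by (auto simp: supporting_rules_def is_model_def)
  moreover have "I \<subseteq> head ` supporting_rules P I"
  proof
    fix x assume "x \<in> I"
    with assms(2) obtain r where "r \<in> P" "body_sat I r" "head r = x" by blast
    with \<open>x \<in> I\<close> show "x \<in> head ` supporting_rules P I"
      unfolding supporting_rules_def by (intro image_eqI[of _ head r]) auto
  qed
  ultimately show ?thesis using assms(1) by (simp add: supported_model_def)
qed

locale planning_task =
  fixes X :: "'x set" and Acts :: "'a set" and pre add :: "'a \<Rightarrow> 'x set"
    and G :: "'x set" and \<alpha> :: "nat \<Rightarrow> 'x"
  assumes actions_in: "\<forall>a\<in>Acts. pre a \<subseteq> X \<and> add a \<subseteq> X"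
    and enum: "bij_betw \<alpha> {1..card X} X"
begin

abbreviation causal :: "('x, 'a) rule set" where
  "causal \<equiv> P_c X Acts pre add G \<alpha>"

abbreviation diagnostic :: "('x, 'a) rule set" where
  "diagnostic \<equiv> P_d X Acts pre add G \<alpha>"

abbreviation deps :: "('x \<times> 'x) set" where
  "deps \<equiv> dep_graph Acts pre add"

lemma pre_in: "a \<in> Acts \<Longrightarrow> q \<in> pre a \<Longrightarrow> q \<in> X"
  using actions_in by blast

lemma add_in: "a \<in> Acts \<Longrightarrow> p \<in> add a \<Longrightarrow> p \<in> X"
  using actions_in by blast

lemma deps_subset_square: "deps \<subseteq> X \<times> X"
  using pre_in add_in by (auto simp: dep_graph_def)

context
  fixes M assumes M: "supported_model diagnostic M"
begin

lemma diagnostic_FAtom: "FAtom \<notin> M"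
proof
  assume "FAtom \<in> M"
  with M obtain r where "r \<in> diagnostic" "body_sat M r" "head r = FAtom"
    by (rule supported_model_supported)
  with \<open>FAtom \<in> M\<close> show False
    by (auto simp: P_d_def rules_C5_def rules_C6_def goal_rules_def Let_def)
qed

lemma diagnostic_WS:
  assumes "WS a p \<in> M"
  shows "a \<in> Acts" "p \<in> add a" "Prop p \<in> M"
proof -
  from M assms obtain r where "r \<in> diagnostic" "body_sat M r" "head r = WS a p"
    by (rule supported_model_supported)
  then show "a \<in> Acts" "p \<in> add a" "Prop p \<in> M"
    by (auto simp: P_d_def rules_C5_def rules_C6_def goal_rules_def Let_def)
qed

lemma diagnostic_WS_Dep: "WS a p \<in> M \<Longrightarrow> q \<in> pre a \<Longrightarrow> Dep p q \<in> M"
  using supported_model_closed[OF M, of "Normal (Dep p q) {WS a p} {}"] diagnostic_WS[of a p]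
  by (auto simp: P_d_def)

lemma diagnostic_Dep_Prop: "Dep p q \<in> M \<Longrightarrow> (p, q) \<in> deps \<Longrightarrow> Prop q \<in> M"
  using supported_model_closed[OF M, of "Normal (Prop q) {Dep p q} {}"]
  by (auto simp: P_d_def)

lemma diagnostic_Prop:
  assumes "Prop p \<in> M"
  shows "\<exists>a\<in>Acts. p \<in> add a \<and> WS a p \<in> M"
proof (rule ccontr)
  assume none: "\<not> ?thesis"
  from M assms obtain r where "r \<in> diagnostic" "body_sat M r" "head r = Prop p"
    by (rule supported_model_supported)
  then have "p \<in> X"
    using assms by (auto simp: P_d_def rules_C5_def rules_C6_def goal_rules_def Let_def dep_graph_def
        intro: pre_in)
  then have "Normal FAtom {Prop p} ({WS a p | a. a \<in> Acts \<and> p \<in> add a} \<union> {FAtom}) \<in> diagnostic"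
    by (auto simp: P_d_def)
  from supported_model_closed[OF M this] none assms diagnostic_FAtom show False by auto
qed

lemma diagnostic_Act:
  assumes "Act a \<in> M"
  shows "\<exists>p. a \<in> Acts \<and> p \<in> add a \<and> WS a p \<in> M"
proof -
  from M assms obtain r where "r \<in> diagnostic" "body_sat M r" "head r = Act a"
    by (rule supported_model_supported)
  then show ?thesis
    by (auto simp: P_d_def rules_C5_def rules_C6_def goal_rules_def Let_def)
qed

lemma diagnostic_Dep:
  assumes "Dep p q \<in> M"
  obtains r where "r \<in> rules_C5 X Acts pre add \<alpha>" "body_sat M r" "head r = Dep p q"
  | a where "a \<in> Acts" "p \<in> add a" "q \<in> pre a" "WS a p \<in> M"
proof -
  from M assms obtain r where "r \<in> diagnostic" "body_sat M r" "head r = Dep p q"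
    by (rule supported_model_supported)
  then show ?thesis
    using that by (auto simp: P_d_def rules_C6_def goal_rules_def Let_def)
qed

lemma is_model_causal_if_diagnostic: "is_model causal M"
  unfolding is_model_def
proof (intro ballI impI, elim conjE)
  fix r assume r: "r \<in> causal" "is_normal r" "body_sat M r"
  show "head r \<in> M"
  proof (cases "\<exists>a p. r = Normal (Prop p) {WS a p} {}")
    case True
    with r(3) show ?thesis using diagnostic_WS by auto
  next
    case False
    with r(1,2) have "r \<in> diagnostic"
      by (auto simp: P_c_def P_d_def)
    from supported_model_closed[OF M this r(2,3)] show ?thesis .
  qed
qed

lemma supported_model_causal_if_diagnostic: "supported_model causal M"
proof (rule supported_modelI[OF is_model_causal_if_diagnostic])
  fix x assume "x \<in> M"
  then show "\<exists>r\<in>causal. body_sat M r \<and> head r = x"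
  proof (cases x)
    case (Prop p)
    with \<open>x \<in> M\<close> obtain a where "a \<in> Acts" "p \<in> add a" "WS a p \<in> M"
      using diagnostic_Prop by blast
    with Prop show ?thesis
      by (intro bexI[of _ "Normal (Prop p) {WS a p} {}"]) (auto simp: P_c_def)
  next
    case (Act a)
    with \<open>x \<in> M\<close> obtain p where "a \<in> Acts" "p \<in> add a" "WS a p \<in> M"
      using diagnostic_Act by blast
    with Act show ?thesis
      by (intro bexI[of _ "Normal (Act a) {WS a p} {}"]) (auto simp: P_c_def)
  next
    case (Dep p q)
    with \<open>x \<in> M\<close> have "Dep p q \<in> M" by simp
    then show ?thesis
    proof (cases rule: diagnostic_Dep)
      case (1 r)
      with Dep show ?thesis by (auto simp: P_c_def)
    next
      case (2 a)
      then have "(p, q) \<in> deps" by (auto simp: dep_graph_def)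
      with \<open>Dep p q \<in> M\<close> have "Prop q \<in> M" by (rule diagnostic_Dep_Prop)
      with Dep \<open>(p, q) \<in> deps\<close> show ?thesis
        by (intro bexI[of _ "Choice (Dep p q) {Prop q} {}"]) (auto simp: P_c_def)
    qed
  next
    case (WS a p)
    with \<open>x \<in> M\<close> have "a \<in> Acts" "p \<in> add a" "Dep p ` pre a \<subseteq> M"
      using diagnostic_WS diagnostic_WS_Dep by auto
    with WS show ?thesis
      by (intro bexI[of _ "Choice (WS a p) (Dep p ` pre a) {}"]) (auto simp: P_c_def)
  qed (use \<open>x \<in> M\<close> diagnostic_FAtom in simp)
qed

end

inductive_set ws_dep_closure :: "('x, 'a) atom set \<Rightarrow> ('x \<times> 'x) set" for N where
  ws: "WS a p \<in> N \<Longrightarrow> q \<in> pre a \<Longrightarrow> (p, q) \<in> ws_dep_closure N"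
| fill: "i \<in> {1..card X - 1} \<Longrightarrow> (p, q) \<in> fill_step deps \<alpha> i \<Longrightarrow>
    (p, \<alpha> i) \<in> ws_dep_closure N \<Longrightarrow> (\<alpha> i, q) \<in> ws_dep_closure N \<Longrightarrow> (p, q) \<in> ws_dep_closure N"

text \<open>
  Dep atoms of a model of \<open>P_c\<close> that are justified by (C1) alone have no support in \<open>P_d\<close>,
  so only those generated from ws atoms by (D4) and (C5) are kept.
\<close>

definition diagnostic_of :: "('x, 'a) atom set \<Rightarrow> ('x, 'a) atom set" where
  "diagnostic_of N =
     {x \<in> N. \<forall>p q. x \<noteq> Dep p q} \<union> {Dep p q | p q. (p, q) \<in> ws_dep_closure N}"

lemma diagnostic_of_simps [simp]:
  "Prop p \<in> diagnostic_of N \<longleftrightarrow> Prop p \<in> N"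
  "Act a \<in> diagnostic_of N \<longleftrightarrow> Act a \<in> N"
  "WS a p \<in> diagnostic_of N \<longleftrightarrow> WS a p \<in> N"
  "FAtom \<in> diagnostic_of N \<longleftrightarrow> FAtom \<in> N"
  "Dep p q \<in> diagnostic_of N \<longleftrightarrow> (p, q) \<in> ws_dep_closure N"
  by (auto simp: diagnostic_of_def)

context
  fixes N assumes N: "supported_model causal N"
begin

lemma causal_FAtom: "FAtom \<notin> N"
proof
  assume "FAtom \<in> N"
  with N obtain r where "r \<in> causal" "body_sat N r" "head r = FAtom"
    by (rule supported_model_supported)
  with \<open>FAtom \<in> N\<close> show False
    by (auto simp: P_c_def rules_C5_def rules_C6_def goal_rules_def Let_def)
qed

lemma causal_Dep:
  assumes "Dep p q \<in> N"
  shows "(p, q) \<in> deps \<and> Prop q \<in> N \<or>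
    (\<exists>i\<in>{1..card X - 1}. (p, q) \<in> fill_step deps \<alpha> i \<and> Dep p (\<alpha> i) \<in> N \<and> Dep (\<alpha> i) q \<in> N)"
proof -
  from N assms obtain r where "r \<in> causal" "body_sat N r" "head r = Dep p q"
    by (rule supported_model_supported)
  then show ?thesis
    by (auto simp: P_c_def rules_C5_def rules_C6_def goal_rules_def Let_def)
qed

lemma causal_fill_closed:
  "i \<in> {1..card X - 1} \<Longrightarrow> (p, q) \<in> fill_step deps \<alpha> i \<Longrightarrow>
    Dep p (\<alpha> i) \<in> N \<Longrightarrow> Dep (\<alpha> i) q \<in> N \<Longrightarrow> Dep p q \<in> N"
  using supported_model_closed[OF N, of "Normal (Dep p q) {Dep p (\<alpha> i), Dep (\<alpha> i) q} {}"]
  by (auto simp: P_c_def rules_C5_def)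

lemma causal_no_2cycle:
  assumes "(p, q) \<in> elim_arcs deps \<alpha> (card X)" "(q, p) \<in> elim_arcs deps \<alpha> (card X)"
  shows "Dep p q \<notin> N \<or> Dep q p \<notin> N"
proof -
  have "p \<in> X" "q \<in> X"
    using assms(1) elim_arcs_subset_square[OF deps_subset_square] by auto
  with assms have "Normal FAtom {Dep p q, Dep q p} {FAtom} \<in> causal"
    by (auto simp: P_c_def rules_C6_def Let_def)
  from supported_model_closed[OF N this] causal_FAtom show ?thesis by auto
qed

lemma causal_WS:
  assumes "WS a p \<in> N"
  shows "a \<in> Acts" "p \<in> add a" "q \<in> pre a \<Longrightarrow> Dep p q \<in> N"
proof -
  from N assms obtain r where "r \<in> causal" "body_sat N r" "head r = WS a p"
    by (rule supported_model_supported)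
  then show "a \<in> Acts" "p \<in> add a" "q \<in> pre a \<Longrightarrow> Dep p q \<in> N"
    by (auto simp: P_c_def rules_C5_def rules_C6_def goal_rules_def Let_def image_subset_iff)
qed

lemma causal_WS_heads:
  assumes "WS a p \<in> N"
  shows "Prop p \<in> N" "Act a \<in> N"
  using supported_model_closed[OF N, of "Normal (Prop p) {WS a p} {}"]
    supported_model_closed[OF N, of "Normal (Act a) {WS a p} {}"] assms causal_WS[OF assms]
  by (auto simp: P_c_def)

lemma causal_Prop:
  assumes "Prop p \<in> N"
  shows "\<exists>a\<in>Acts. p \<in> add a \<and> WS a p \<in> N"
proof -
  from N assms obtain r where "r \<in> causal" "body_sat N r" "head r = Prop p"
    by (rule supported_model_supported)
  with assms show ?thesis
    by (auto simp: P_c_def rules_C5_def rules_C6_def goal_rules_def Let_def)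
qed

lemma causal_Act:
  assumes "Act a \<in> N"
  shows "\<exists>p. a \<in> Acts \<and> p \<in> add a \<and> WS a p \<in> N"
proof -
  from N assms obtain r where "r \<in> causal" "body_sat N r" "head r = Act a"
    by (rule supported_model_supported)
  then show ?thesis
    by (auto simp: P_c_def rules_C5_def rules_C6_def goal_rules_def Let_def)
qed

lemma causal_goal: "g \<in> G \<Longrightarrow> Prop g \<in> N"
  using supported_model_closed[OF N, of "Normal (Prop g) {} {Prop g}"]
  by (auto simp: P_c_def goal_rules_def)

lemma causal_deps_wf: "wf ({(p, q). Dep p q \<in> N}\<inverse>)"
proof -
  interpret elimination_closed X deps \<alpha> "card X" "{(p, q). Dep p q \<in> N}"
  proof
    show "False" if "(p, q) \<in> {(p, q). Dep p q \<in> N}" "(q, p) \<in> {(p, q). Dep p q \<in> N}"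
      "(p, q) \<in> elim_arcs deps \<alpha> (card X)" "(q, p) \<in> elim_arcs deps \<alpha> (card X)" for p q
      using causal_no_2cycle that by auto
    show "(p, q) \<in> {(p, q). Dep p q \<in> N}"
      if "i \<in> {1..card X - 1}" "(p, q) \<in> fill_step deps \<alpha> i"
        "(p, \<alpha> i) \<in> {(p, q). Dep p q \<in> N}" "(\<alpha> i, q) \<in> {(p, q). Dep p q \<in> N}" for i p q
      using causal_fill_closed that by auto
    show "(p, q) \<in> deps \<or> (\<exists>i\<in>{1..card X - 1}. (p, q) \<in> fill_step deps \<alpha> i \<and>
        (p, \<alpha> i) \<in> {(p, q). Dep p q \<in> N} \<and> (\<alpha> i, q) \<in> {(p, q). Dep p q \<in> N})"
      if "(p, q) \<in> {(p, q). Dep p q \<in> N}" for p q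
      using causal_Dep that by auto
  qed (use enum deps_subset_square in auto)
  show ?thesis by (rule wf_converse_R)
qed

lemma causal_Dep_Prop: "Dep p q \<in> N \<Longrightarrow> Prop q \<in> N"
proof (induction p arbitrary: q rule: wf_induct_rule[OF causal_deps_wf])
  case (1 p)
  from causal_Dep[OF "1.prems"] show ?case
  proof (elim disjE bexE conjE)
    fix i assume "Dep p (\<alpha> i) \<in> N" "Dep (\<alpha> i) q \<in> N"
    with "1.IH" show ?thesis by blast
  qed
qed

lemma ws_dep_closure_Dep: "(p, q) \<in> ws_dep_closure N \<Longrightarrow> Dep p q \<in> N"
  by (induction rule: ws_dep_closure.induct) (auto intro: causal_WS causal_fill_closed)

lemma diagnostic_of_FAtom_rule_blocked:
  assumes "r \<in> diagnostic" and "head r = FAtom"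
  shows "\<not> body_sat (diagnostic_of N) r"
proof
  assume body: "body_sat (diagnostic_of N) r"
  from assms consider
    (C6) p q where "r = Normal FAtom {Dep p q, Dep q p} {FAtom}"
      "(p, q) \<in> elim_arcs deps \<alpha> (card X)" "(q, p) \<in> elim_arcs deps \<alpha> (card X)"
  | (D3) p where "r = Normal FAtom {Prop p} ({WS a p | a. a \<in> Acts \<and> p \<in> add a} \<union> {FAtom})"
    by (auto simp: P_d_def rules_C5_def rules_C6_def goal_rules_def Let_def)
  then show False
  proof cases
    case C6
    with body causal_no_2cycle ws_dep_closure_Dep show False by auto
  next
    case D3
    have "WS a p \<notin> N" if "a \<in> Acts" "p \<in> add a" for a
      using body that unfolding D3 by auto
    moreover have "Prop p \<in> N" using body unfolding D3 by simp
    ultimately show False using causal_Prop by auto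
  qed
qed

lemma is_model_diagnostic_of: "is_model diagnostic (diagnostic_of N)"
  unfolding is_model_def
proof (intro ballI impI, elim conjE)
  fix r assume r: "r \<in> diagnostic" "is_normal r" "body_sat (diagnostic_of N) r"
  with diagnostic_of_FAtom_rule_blocked have "head r \<noteq> FAtom" by blast
  from r(1) show "head r \<in> diagnostic_of N"
    unfolding P_d_def
  proof (elim UnE)
    assume "r \<in> rules_C5 X Acts pre add \<alpha>"
    then obtain i p q where "r = Normal (Dep p q) {Dep p (\<alpha> i), Dep (\<alpha> i) q} {}"
      and "i \<in> {1..card X - 1}" "(p, q) \<in> fill_step deps \<alpha> i"
      by (auto simp: rules_C5_def)
    with r(3) show ?thesis by (simp add: ws_dep_closure.fill)
  next
    assume "r \<in> {Normal (Dep p q) {WS a p} {} | a p q. a \<in> Acts \<and> p \<in> add a \<and> q \<in> pre a}"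
    with r(3) show ?thesis by (auto intro: ws_dep_closure.ws)
  next
    assume "r \<in> {Normal (Prop q) {Dep p q} {} | p q. (p, q) \<in> deps}"
    then obtain p q where r_eq: "r = Normal (Prop q) {Dep p q} {}" by blast
    with r(3) have "Dep p q \<in> N" using ws_dep_closure_Dep by simp
    with r_eq show ?thesis using causal_Dep_Prop by simp
  next
    assume "r \<in> {Normal (Act a) {WS a p} {} | a p. a \<in> Acts \<and> p \<in> add a}"
    with r(3) show ?thesis by (auto dest: causal_WS_heads)
  next
    assume "r \<in> goal_rules G"
    with r(3) show ?thesis by (auto simp: goal_rules_def dest: causal_goal)
  qed (use r(2) \<open>head r \<noteq> FAtom\<close> in \<open>auto simp: rules_C6_def Let_def\<close>)
qed

lemma supported_model_diagnostic_of: "supported_model diagnostic (diagnostic_of N)"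
proof (rule supported_modelI[OF is_model_diagnostic_of])
  fix x assume x: "x \<in> diagnostic_of N"
  then show "\<exists>r\<in>diagnostic. body_sat (diagnostic_of N) r \<and> head r = x"
  proof (cases x)
    case (Prop p)
    with x obtain a where "a \<in> Acts" "p \<in> add a" using causal_Prop by auto
    then have "p \<in> X" by (rule add_in)
    with Prop show ?thesis
      by (intro bexI[of _ "Choice (Prop p) {} {}"]) (auto simp: P_d_def)
  next
    case (Act a)
    with x obtain p where "a \<in> Acts" "p \<in> add a" "WS a p \<in> N" using causal_Act by auto
    with Act show ?thesis
      by (intro bexI[of _ "Normal (Act a) {WS a p} {}"]) (auto simp: P_d_def)
  next
    case (Dep p q)
    with x have "(p, q) \<in> ws_dep_closure N" by simp
    then show ?thesis
    proof cases
      case (ws a)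
      with Dep show ?thesis using causal_WS[of a p]
        by (intro bexI[of _ "Normal (Dep p q) {WS a p} {}"]) (auto simp: P_d_def)
    next
      case (fill i)
      with Dep show ?thesis
        by (intro bexI[of _ "Normal (Dep p q) {Dep p (\<alpha> i), Dep (\<alpha> i) q} {}"])
          (auto simp: P_d_def rules_C5_def)
    qed
  next
    case (WS a p)
    with x have "a \<in> Acts" "p \<in> add a" "Prop p \<in> N"
      using causal_WS causal_WS_heads by auto
    with WS show ?thesis
      by (intro bexI[of _ "Choice (WS a p) {Prop p} {}"]) (auto simp: P_d_def)
  qed (use x causal_FAtom in simp)
qed

end

end

theorem theorem3:
  fixes X :: "'x set" and Acts :: "'a set"
    and pre add :: "'a \<Rightarrow> 'x set" and G :: "'x set"
    and \<alpha> :: "nat \<Rightarrow> 'x" and A' :: "'a set"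
  assumes "finite X" and "finite Acts"
    and "\<forall>a\<in>Acts. pre a \<subseteq> X \<and> add a \<subseteq> X"
    and "G \<subseteq> X"
    and "bij_betw \<alpha> {1..card X} X"
    and "A' \<subseteq> Acts"
  shows "(\<exists>M. supported_model (P_d X Acts pre add G \<alpha>) M \<and> A' = {a\<in>Acts. Act a \<in> M})
     \<longleftrightarrow> (\<exists>N. supported_model (P_c X Acts pre add G \<alpha>) N \<and> A' = {a\<in>Acts. Act a \<in> N})"
proof -
  interpret planning_task X Acts pre add G \<alpha>
    using assms(3,5) by unfold_locales
  show ?thesis
  proof
    assume "\<exists>M. supported_model diagnostic M \<and> A' = {a\<in>Acts. Act a \<in> M}"
    then show "\<exists>N. supported_model causal N \<and> A' = {a\<in>Acts. Act a \<in> N}"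
      using supported_model_causal_if_diagnostic by blast
  next
    assume "\<exists>N. supported_model causal N \<and> A' = {a\<in>Acts. Act a \<in> N}"
    then obtain N where N: "supported_model causal N" and A': "A' = {a\<in>Acts. Act a \<in> N}"
      by blast
    show "\<exists>M. supported_model diagnostic M \<and> A' = {a\<in>Acts. Act a \<in> M}"
      using supported_model_diagnostic_of[OF N] A' by auto
  qed
qed

end
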